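(* Let $W\in\mathbb{R}^{m\times n}$ have columns $w_1,\dots,w_n$, all nonzero, let $F:=WW^\top$ and $r:=\operatorname{rank}(W)=\operatorname{rank}(F)$. Define leverage scores $\ell_i:=w_i^\top F^+w_i$, fractional dimensionalities $D_i:=\|w_i\|^4/(w_i^\top Fw_i)$, and relative slack $\sigma_i:=1-D_i/\ell_i\in[0,1]$. Then: (1) $\sum_{i=1}^n\ell_i=r$; (2) $D_i\le\ell_i$ for all $i$, with equality iff the spectral measure $\mu_i$ is a Dirac mass, equivalently iff $w_i$ is an eigenvector of $F$; (3) $r-\sum_{i=1}^nD_i=\sum_{i=1}^n(\ell_i-D_i)=\sum_{i=1}^n\ell_i\sigma_i$; in particular, if $r=m$ then $m-\sum_iD_i=\sum_i\ell_i\sigma_i$.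
   Context: $F^+$ is the Moore–Penrose pseudoinverse of $F$. Writing $F=\sum_{k:\lambda_k>0}\lambda_kP_k$ on $\operatorname{Im}(F)$ with $P_k$ the orthogonal projectors onto the eigenspaces for distinct positive eigenvalues $\lambda_k$, the spectral measure of $w_i$ is $\mu_i:=\sum_{k}\frac{\|P_kw_i\|^2}{\|w_i\|^2}\delta_{\lambda_k}$. *)

theory Defs
  imports "HOL-Analysis.Analysis" "HOL-Probability.Giry_Monad"
begin

definition pinv :: "real^'n^'n \<Rightarrow> real^'n^'n" where
  "pinv A = (THE X. A ** X ** A = A \<and> X ** A ** X = X \<and>
                   transpose (A ** X) = A ** X \<and> transpose (X ** A) = X ** A)"

definition eigenspace :: "real^'n^'n \<Rightarrow> real \<Rightarrow> (real^'n) set" where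
  "eigenspace A lam = {v. A *v v = lam *\<^sub>R v}"

definition pos_eigenvalues :: "real^'n^'n \<Rightarrow> real set" where
  "pos_eigenvalues A = {lam. lam > 0 \<and> (\<exists>v. v \<noteq> 0 \<and> A *v v = lam *\<^sub>R v)}"

definition eig_proj :: "real^'n^'n \<Rightarrow> real \<Rightarrow> real^'n \<Rightarrow> real^'n" where
  "eig_proj A lam v = closest_point (eigenspace A lam) v"

definition spectral_measure :: "real^'n^'n \<Rightarrow> real^'n \<Rightarrow> real measure" where
  "spectral_measure A w = measure_of UNIV (sets borel)
     (\<lambda>S. ennreal (\<Sum>lam \<in> S \<inter> pos_eigenvalues A. (norm (eig_proj A lam w))^2 / (norm w)^2))"

definition leverage :: "real^'n^'m \<Rightarrow> 'n \<Rightarrow> real" where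
  "leverage W i = column i W \<bullet> (pinv (W ** transpose W) *v column i W)"

definition frac_dim :: "real^'n^'m \<Rightarrow> 'n \<Rightarrow> real" where
  "frac_dim W i = (norm (column i W))^4 / (column i W \<bullet> ((W ** transpose W) *v column i W))"

definition rel_slack :: "real^'n^'m \<Rightarrow> 'n \<Rightarrow> real" where
  "rel_slack W i = 1 - frac_dim W i / leverage W i"

end

theory Submission
  imports Defs
begin

text \<open>
  The orthogonal projection onto a subspace \<open>S\<close> is \<open>closest_point S\<close>. For a symmetric
  matrix \<open>F\<close> with projection \<open>P\<close> onto its range, \<open>ker F\<close> is the orthogonal complement of
  \<open>range F\<close>, so \<open>G = F + (I - P)\<close> is invertible and \<open>X = G\<^sup>-\<^sup>1 P\<close> satisfies the Penrose
  conditions with \<open>F X = X F = P\<close>. For \<open>F = W W\<^sup>T\<close> the range of \<open>F\<close> is that of \<open>W\<close>, hence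
  \<open>P\<close> fixes every column and \<open>\<Sum>\<^sub>i l\<^sub>i = trace (F\<^sup>+ F) = trace P = rank W\<close>.

  With \<open>a = W\<^sup>T w\<^sub>i\<close> and \<open>b = W\<^sup>T F\<^sup>+ w\<^sub>i\<close> one has \<open>a \<bullet> b = norm w\<^sub>i ^ 2\<close>, \<open>a \<bullet> a = w\<^sub>i \<bullet> F w\<^sub>i\<close> and
  \<open>b \<bullet> b = l\<^sub>i\<close>, so \<open>D\<^sub>i = (a \<bullet> b)\<^sup>2 / (a \<bullet> a) \<le> b \<bullet> b = l\<^sub>i\<close> is Cauchy--Schwarz, with equality
  iff \<open>b\<close> is parallel to \<open>a\<close>, which after applying \<open>W\<close> says that \<open>w\<^sub>i\<close> is an eigenvector
  of \<open>F\<close>. The spectral measure of \<open>w\<^sub>i\<close> is a Dirac mass at \<open>\<lambda>\<close> iff the projection onto the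
  \<open>\<lambda>\<close>-eigenspace preserves the norm of \<open>w\<^sub>i\<close>, i.e. iff \<open>w\<^sub>i\<close> lies in that eigenspace.
\<close>

section \<open>Orthogonal projection onto a subspace\<close>

lemma closest_point_subspace_in:
  fixes S :: "'a::euclidean_space set"
  assumes "subspace S"
  shows "closest_point S x \<in> S"
  using assms closest_point_in_set closed_subspace subspace_0 by blast

lemma closest_point_subspace_orthogonal:
  fixes S :: "'a::euclidean_space set"
  assumes S: "subspace S" and "y \<in> S"
  shows "(x - closest_point S x) \<bullet> y = 0"
proof -
  let ?p = "closest_point S x"
  have p: "?p \<in> S" using S by (rule closest_point_subspace_in)
  have "(x - ?p) \<bullet> ((?p + t *\<^sub>R y) - ?p) \<le> 0" for t
    using S p \<open>y \<in> S\<close>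
    by (intro closest_point_dot subspace_imp_convex closed_subspace subspace_add subspace_scale)
  from this[of 1] this[of "-1"] show ?thesis by simp
qed

lemma closest_point_subspace_unique:
  fixes S :: "'a::euclidean_space set"
  assumes S: "subspace S" and "p \<in> S" and orth: "\<And>y. y \<in> S \<Longrightarrow> (x - p) \<bullet> y = 0"
  shows "closest_point S x = p"
proof -
  let ?q = "closest_point S x"
  have q: "?q \<in> S" using S by (rule closest_point_subspace_in)
  have "p - ?q \<in> S" using S \<open>p \<in> S\<close> q by (rule subspace_diff)
  then have "(x - ?q) \<bullet> (p - ?q) = 0" "(x - p) \<bullet> (p - ?q) = 0"
    using closest_point_subspace_orthogonal[OF S] orth by blast+
  then have "(p - ?q) \<bullet> (p - ?q) = 0" by (simp add: inner_diff_left)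
  then show ?thesis by simp
qed

lemma linear_closest_point_subspace:
  fixes S :: "'a::euclidean_space set"
  assumes S: "subspace S"
  shows "linear (closest_point S)"
proof
  let ?P = "closest_point S"
  have res: "(x - ?P x) \<bullet> z = 0" if "z \<in> S" for x z
    using closest_point_subspace_orthogonal[OF S that] .
  show "?P (x + y) = ?P x + ?P y" for x y
  proof (rule closest_point_subspace_unique[OF S])
    show "?P x + ?P y \<in> S" using S by (intro subspace_add closest_point_subspace_in)
    show "(x + y - (?P x + ?P y)) \<bullet> z = 0" if "z \<in> S" for z
      using res[OF that, of x] res[OF that, of y] by (simp add: inner_diff_left inner_add_left)
  qed
  show "?P (c *\<^sub>R x) = c *\<^sub>R ?P x" for c x
  proof (rule closest_point_subspace_unique[OF S])
    show "c *\<^sub>R ?P x \<in> S" using S by (intro subspace_scale closest_point_subspace_in)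
    show "(c *\<^sub>R x - c *\<^sub>R ?P x) \<bullet> z = 0" if "z \<in> S" for z
      using res[OF that, of x] by (simp add: inner_diff_left)
  qed
qed

lemma closest_point_subspace_self_adjoint:
  fixes S :: "'a::euclidean_space set"
  assumes S: "subspace S"
  shows "closest_point S x \<bullet> y = x \<bullet> closest_point S y"
proof -
  have "(y - closest_point S y) \<bullet> closest_point S x = 0"
    "(x - closest_point S x) \<bullet> closest_point S y = 0"
    by (rule closest_point_subspace_orthogonal[OF S closest_point_subspace_in[OF S]])+
  then show ?thesis by (simp add: inner_diff_right inner_commute)
qed

lemma closest_point_span_orthonormal:
  fixes B :: "'a::euclidean_space set"
  assumes fin: "finite B" and orth: "pairwise orthogonal B" and unit: "\<And>b. b \<in> B \<Longrightarrow> norm b = 1"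
  shows "closest_point (span B) x = (\<Sum>b\<in>B. (b \<bullet> x) *\<^sub>R b)"
proof (rule closest_point_subspace_unique)
  let ?p = "\<Sum>b\<in>B. (b \<bullet> x) *\<^sub>R b"
  have coeff: "b \<bullet> ?p = b \<bullet> x" if "b \<in> B" for b
  proof -
    have "b \<bullet> ?p = (\<Sum>c\<in>B. if c = b then b \<bullet> x else 0)"
      unfolding inner_sum_right
      using orth unit[OF that] that
      by (intro sum.cong) (auto simp: pairwise_def orthogonal_def dot_square_norm)
    then show ?thesis using fin that by simp
  qed
  show "subspace (span B)" by simp
  show "?p \<in> span B" by (intro span_sum span_scale span_base)
  show "(x - ?p) \<bullet> y = 0" if "y \<in> span B" for y
    using orthogonal_to_span[OF that, of "x - ?p"] coeff
    by (simp add: orthogonal_def inner_diff_left inner_diff_right inner_commute)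
qed

lemma trace_closest_point_subspace:
  fixes M :: "real^'n^'n"
  assumes S: "subspace S" and M: "\<And>x. M *v x = closest_point S x"
  shows "trace M = real (dim S)"
proof -
  obtain B where "pairwise orthogonal B" and unit: "\<And>b. b \<in> B \<Longrightarrow> norm b = 1"
    and "independent B" "card B = dim S" "span B = S"
    using orthonormal_basis_subspace[OF S] by metis
  then have fin: "finite B" using independent_imp_finite by blast
  have "M $ k $ k = (\<Sum>b\<in>B. b $ k * b $ k)" for k
  proof -
    have "M $ k $ k = (M *v axis k 1) $ k" by (simp add: matrix_vector_mult_basis column_def)
    also have "\<dots> = (\<Sum>b\<in>B. b $ k * b $ k)"
      using closest_point_span_orthonormal[OF fin \<open>pairwise orthogonal B\<close> unit]
      by (simp add: M \<open>span B = S\<close>[symmetric] inner_axis)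
    finally show ?thesis .
  qed
  then have "trace M = (\<Sum>b\<in>B. b \<bullet> b)"
    by (simp add: trace_def inner_vec_def sum.swap[of _ B])
  also have "\<dots> = real (card B)" using unit by (simp add: dot_square_norm)
  finally show ?thesis using \<open>card B = dim S\<close> by simp
qed

section \<open>Pseudoinverse of a symmetric matrix\<close>

lemma inner_transpose_left:
  fixes A :: "real^'n^'m"
  shows "(transpose A *v x) \<bullet> y = x \<bullet> (A *v y)"
  by (simp add: dot_lmul_matrix)

lemma symmetric_matrix_self_adjoint:
  fixes M :: "real^'n^'n"
  assumes "transpose M = M"
  shows "(M *v x) \<bullet> y = x \<bullet> (M *v y)"
  by (metis assms inner_transpose_left)

lemma symmetric_matrixI:
  fixes M :: "real^'n^'n"
  assumes "\<And>x y. (M *v x) \<bullet> y = x \<bullet> (M *v y)"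
  shows "transpose M = M"
proof -
  have "(transpose M *v x - M *v x) \<bullet> y = 0" for x y
    using assms[of x y] inner_transpose_left[of M x y] by (simp only: inner_diff_left)
  then have "transpose M *v x = M *v x" for x
    by (metis inner_eq_zero_iff right_minus_eq)
  then show ?thesis by (simp add: matrix_eq)
qed

lemma subspace_range_matrix: "subspace (range ((*v) (A :: real^'n^'m)))"
  by (metis matrix_vector_mul_linear subspace_UNIV linear_subspace_image)

lemma symmetric_matrix_annihilates_residual:
  fixes F :: "real^'n^'n"
  assumes sym: "transpose F = F"
  shows "F *v (x - closest_point (range ((*v) F)) x) = 0"
proof -
  let ?r = "x - closest_point (range ((*v) F)) x"
  have "?r \<bullet> (F *v (F *v ?r)) = 0"
    using subspace_range_matrix by (rule closest_point_subspace_orthogonal) simp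
  then have "(F *v ?r) \<bullet> (F *v ?r) = 0"
    by (simp add: symmetric_matrix_self_adjoint[OF sym])
  then show ?thesis by simp
qed

lemma pinv_unique:
  fixes A X Y :: "real^'n^'n"
  assumes X: "A ** X ** A = A" "X ** A ** X = X" "transpose (A ** X) = A ** X" "transpose (X ** A) = X ** A"
  assumes Y: "A ** Y ** A = A" "Y ** A ** Y = Y" "transpose (A ** Y) = A ** Y" "transpose (Y ** A) = Y ** A"
  shows "X = Y"
proof -
  have "A ** X = transpose (A ** Y ** A ** X)" using X(3) Y(1) by simp
  also have "\<dots> = transpose (A ** X) ** transpose (A ** Y)"
    by (simp add: matrix_transpose_mul matrix_mul_assoc)
  also have "\<dots> = A ** Y" by (metis X(1,3) Y(3) matrix_mul_assoc)
  finally have AX: "A ** X = A ** Y" .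
  have "X ** A = transpose (X ** A ** Y ** A)" by (metis X(4) Y(1) matrix_mul_assoc)
  also have "\<dots> = transpose (Y ** A) ** transpose (X ** A)"
    by (simp add: matrix_transpose_mul matrix_mul_assoc)
  also have "\<dots> = Y ** A" by (metis X(1,4) Y(4) matrix_mul_assoc)
  finally have XA: "X ** A = Y ** A" .
  have "X = X ** A ** X" using X(2) by simp
  also have "\<dots> = Y ** A ** Y" using AX XA by (metis matrix_mul_assoc)
  finally show ?thesis using Y(2) by simp
qed

lemma pinv_eqI:
  fixes A X :: "real^'n^'n"
  assumes "A ** X ** A = A" "X ** A ** X = X" "transpose (A ** X) = A ** X" "transpose (X ** A) = X ** A"
  shows "pinv A = X"
  unfolding pinv_def using assms pinv_unique[of A X] by (intro the_equality) blast+

lemma inj_symmetric_matrix_plus_residual: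
  fixes F :: "real^'n^'n"
  assumes sym: "transpose F = F"
  defines "P \<equiv> closest_point (range ((*v) F))"
  shows "inj (\<lambda>v. F *v v + (v - P v))"
proof -
  have S: "subspace (range ((*v) F))" by (rule subspace_range_matrix)
  have lin: "linear (\<lambda>v. F *v v + (v - P v))"
    using linear_closest_point_subspace[OF S] unfolding P_def
    by (intro linear_compose_add[OF matrix_vector_mul_linear] linear_compose_sub[OF linear_ident])
  have "v = 0" if "F *v v + (v - P v) = 0" for v
  proof -
    define r where "r = v - P v"
    have Fv: "F *v v = - r" using that unfolding r_def by (simp only: eq_neg_iff_add_eq_0)
    have "r \<bullet> (F *v v) = 0"
      unfolding r_def P_def by (rule closest_point_subspace_orthogonal[OF S]) simp
    then have "r = 0" using Fv by simp
    then have "v = P v" unfolding r_def by (rule right_minus_eq[THEN iffD1])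
    have "P v \<in> range ((*v) F)" unfolding P_def by (rule closest_point_subspace_in[OF S])
    then obtain u where "P v = F *v u" by blast
    with \<open>v = P v\<close> have "v \<bullet> v = u \<bullet> (F *v v)"
      using symmetric_matrix_self_adjoint[OF sym] by (metis trans)
    then show ?thesis using Fv \<open>r = 0\<close> by simp
  qed
  then show ?thesis unfolding linear_injective_0[OF lin] by blast
qed

lemma symmetric_matrix_inverse_on_range:
  fixes F :: "real^'n^'n"
  assumes sym: "transpose F = F"
  defines "P \<equiv> closest_point (range ((*v) F))"
  obtains X where "\<And>x. F *v (X *v x) = P x" "\<And>x. X *v (F *v x) = P x" "\<And>x. P (X *v x) = X *v x"
proof -
  have S: "subspace (range ((*v) F))" by (rule subspace_range_matrix)
  define Q where "Q x = x - P x" for x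
  have linP: "linear P" unfolding P_def using S by (rule linear_closest_point_subspace)
  have linQ: "linear Q" unfolding Q_def[abs_def] using linP by (intro linear_compose_sub linear_ident)
  have FQ: "F *v Q x = 0" for x unfolding Q_def P_def using sym by (rule symmetric_matrix_annihilates_residual)
  have QF: "Q (F *v x) = 0" for x unfolding Q_def P_def by (simp add: closest_point_self)
  have QP: "Q (P x) = 0" for x
    unfolding Q_def P_def by (simp add: closest_point_self closest_point_subspace_in[OF S])
  have QQ: "Q (Q x) = Q x" for x using QP linear_diff[OF linQ] by (simp add: Q_def)
  define G where "G x = F *v x + Q x" for x
  have linG: "linear G" unfolding G_def[abs_def] using linQ by (intro linear_compose_add) auto
  have "inj G"
    unfolding G_def[abs_def] Q_def P_def using sym by (rule inj_symmetric_matrix_plus_residual)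
  then obtain g where g: "linear g" "\<And>x. g (G x) = x" "\<And>x. G (g x) = x"
    using linear_injective_isomorphism[OF linG] by metis
  have GP: "G (P x) = F *v x" for x
    using FQ[of x] QP[of x] by (simp add: G_def Q_def matrix_vector_mult_diff_distrib)
  have Qg: "Q (g (P x)) = 0" for x
  proof -
    have "Q (G (g (P x))) = Q (P x)" by (simp add: g)
    then show ?thesis using QF QP QQ linear_add[OF linQ] by (simp add: G_def)
  qed
  have X: "matrix (g \<circ> P) *v x = g (P x)" for x
    using linear_compose[OF linP g(1)] matrix_vector_mul(2) by (metis comp_apply)
  show thesis
  proof (rule that[of "matrix (g \<circ> P)"])
    show "F *v (matrix (g \<circ> P) *v x) = P x" for x
      using g(3)[of "P x"] Qg[of x] by (simp add: X G_def)
    show "matrix (g \<circ> P) *v (F *v x) = P x" for x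
      using QF[of x] g(2)[of "P x"] GP[of x] by (simp add: X Q_def)
    show "P (matrix (g \<circ> P) *v x) = matrix (g \<circ> P) *v x" for x
      using Qg[of x] by (simp add: X Q_def)
  qed
qed

lemma pinv_symmetric_matrix:
  fixes F :: "real^'n^'n"
  assumes sym: "transpose F = F"
  shows "F *v (pinv F *v x) = closest_point (range ((*v) F)) x"
    and "pinv F *v (F *v x) = closest_point (range ((*v) F)) x"
proof -
  let ?P = "closest_point (range ((*v) F))"
  have S: "subspace (range ((*v) F))" by (rule subspace_range_matrix)
  obtain X where FX: "\<And>x. F *v (X *v x) = ?P x" and XF: "\<And>x. X *v (F *v x) = ?P x"
    and PX: "\<And>x. ?P (X *v x) = X *v x"
    using symmetric_matrix_inverse_on_range[OF sym] by blast
  have "pinv F = X"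
  proof (rule pinv_eqI)
    show "F ** X ** F = F"
      by (simp add: matrix_eq FX closest_point_self flip: matrix_vector_mul_assoc)
    show "X ** F ** X = X"
      by (simp add: matrix_eq XF PX flip: matrix_vector_mul_assoc)
    show "transpose (F ** X) = F ** X" "transpose (X ** F) = X ** F"
      by (rule symmetric_matrixI;
          simp add: FX XF closest_point_subspace_self_adjoint[OF S] flip: matrix_vector_mul_assoc)+
  qed
  then show "F *v (pinv F *v x) = ?P x" "pinv F *v (F *v x) = ?P x"
    by (simp_all add: FX XF)
qed

section \<open>Gram matrices and leverage scores\<close>

lemma inner_Gram_matrix:
  fixes W :: "real^'n^'m"
  shows "x \<bullet> ((W ** transpose W) *v y) = (transpose W *v x) \<bullet> (transpose W *v y)"
  by (metis inner_transpose_left matrix_vector_mul_assoc)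

lemma symmetric_Gram_matrix: "transpose (W ** transpose W) = (W ** transpose W :: real^'m^'m)"
  by (simp add: matrix_transpose_mul)

lemma range_Gram_matrix:
  fixes W :: "real^'n^'m"
  shows "range ((*v) (W ** transpose W)) = range ((*v) W)"
proof
  show "range ((*v) (W ** transpose W)) \<subseteq> range ((*v) W)"
    by (auto simp flip: matrix_vector_mul_assoc)
  show "range ((*v) W) \<subseteq> range ((*v) (W ** transpose W))"
  proof clarify
    fix z
    let ?S = "range ((*v) (W ** transpose W))" and ?v = "W *v z"
    let ?r = "?v - closest_point ?S ?v"
    have "(W ** transpose W) *v ?r = 0"
      by (rule symmetric_matrix_annihilates_residual[OF symmetric_Gram_matrix])
    then have "transpose W *v ?r = 0"
      using inner_Gram_matrix[of ?r W ?r] by simp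
    then have "?r \<bullet> ?v = 0" using inner_transpose_left[of W ?r z] by simp
    moreover have "?r \<bullet> closest_point ?S ?v = 0"
      by (intro closest_point_subspace_orthogonal subspace_range_matrix closest_point_subspace_in)
    ultimately have "?r \<bullet> ?r = 0" by (simp add: inner_diff_right)
    then show "?v \<in> ?S"
      using closest_point_subspace_in[OF subspace_range_matrix] by (metis inner_eq_zero_iff right_minus_eq)
  qed
qed

lemma rank_Gram_matrix: "rank (W ** transpose W) = rank (W :: real^'n^'m)"
  by (simp add: rank_dim_range range_Gram_matrix)

lemma Gram_pinv_cancel:
  fixes W :: "real^'n^'m"
  defines "F \<equiv> W ** transpose W"
  assumes "w \<in> range ((*v) W)"
  shows "F *v (pinv F *v w) = w" and "pinv F *v (F *v w) = w"
  using pinv_symmetric_matrix[OF symmetric_Gram_matrix, of W] assms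
  by (simp_all add: closest_point_self range_Gram_matrix)

lemma Gram_quadratic_form_pos:
  fixes W :: "real^'n^'m"
  assumes "w \<in> range ((*v) W)" and "w \<noteq> 0"
  shows "0 < w \<bullet> ((W ** transpose W) *v w)"
proof -
  obtain z where "w = W *v z" using assms(1) by blast
  then have "(transpose W *v w) \<bullet> z = w \<bullet> w" unfolding inner_transpose_left by simp
  then have "transpose W *v w \<noteq> 0" using assms(2) by auto
  then show ?thesis by (simp add: inner_Gram_matrix)
qed

lemma Gram_eigenvalue_pos:
  fixes W :: "real^'n^'m"
  assumes "w \<in> range ((*v) W)" and "w \<noteq> 0" and "(W ** transpose W) *v w = lam *\<^sub>R w"
  shows "0 < lam"
proof -
  have "0 < lam * (w \<bullet> w)" using Gram_quadratic_form_pos[OF assms(1,2)] assms(3) by simp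
  moreover have "0 < w \<bullet> w" using assms(2) by simp
  ultimately show ?thesis by (simp add: zero_less_mult_iff)
qed

lemma column_in_range: "column i W \<in> range ((*v) (W :: real^'n^'m))"
  by (metis matrix_vector_mult_basis rangeI)

lemma sum_inner_columns_eq_trace:
  fixes W :: "real^'n^'m" and X :: "real^'m^'m"
  shows "(\<Sum>i\<in>UNIV. column i W \<bullet> (X *v column i W)) = trace (X ** (W ** transpose W))"
proof -
  have "(transpose W ** (X ** W)) $ i $ i = column i W \<bullet> (X *v column i W)" for i
    by (simp add: matrix_matrix_mult_def transpose_def column_def inner_vec_def matrix_vector_mult_def)
  then have "(\<Sum>i\<in>UNIV. column i W \<bullet> (X *v column i W)) = trace (transpose W ** (X ** W))"
    by (simp add: trace_def)
  also have "\<dots> = trace ((X ** W) ** transpose W)" by (rule trace_mul_sym)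
  also have "\<dots> = trace (X ** (W ** transpose W))" by (simp add: matrix_mul_assoc)
  finally show ?thesis .
qed

lemma sum_leverage_eq_rank: "(\<Sum>i\<in>UNIV. leverage W i) = real (rank W)"
proof -
  let ?F = "W ** transpose W"
  have "(\<Sum>i\<in>UNIV. leverage W i) = trace (pinv ?F ** ?F)"
    unfolding leverage_def by (rule sum_inner_columns_eq_trace)
  also have "\<dots> = real (dim (range ((*v) ?F)))"
    using subspace_range_matrix
    by (rule trace_closest_point_subspace)
       (metis matrix_vector_mul_assoc pinv_symmetric_matrix(2) symmetric_Gram_matrix)
  finally show ?thesis by (simp add: rank_dim_range[symmetric] rank_Gram_matrix)
qed

lemma Cauchy_Schwarz_eq_iff_parallel:
  fixes a b :: "'a::real_inner"
  assumes "a \<noteq> 0"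
  shows "(a \<bullet> b)^2 = (a \<bullet> a) * (b \<bullet> b) \<longleftrightarrow> (\<exists>c. b = c *\<^sub>R a)"
proof
  assume eq: "(a \<bullet> b)^2 = (a \<bullet> a) * (b \<bullet> b)"
  define c where "c = (a \<bullet> b) / (a \<bullet> a)"
  have "(b - c *\<^sub>R a) \<bullet> (b - c *\<^sub>R a) = ((a \<bullet> a) * (b \<bullet> b) - (a \<bullet> b)^2) / (a \<bullet> a)"
    using assms by (simp add: c_def inner_diff inner_commute field_simps power2_eq_square)
  also have "\<dots> = 0" using eq by simp
  finally show "\<exists>c. b = c *\<^sub>R a" by auto
next
  assume "\<exists>c. b = c *\<^sub>R a"
  then show "(a \<bullet> b)^2 = (a \<bullet> a) * (b \<bullet> b)" by (auto simp: power2_eq_square)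
qed

lemma frac_dim_leverage_as_inner:
  fixes W :: "real^'n^'m" and i :: 'n
  defines "a \<equiv> transpose W *v column i W"
    and "b \<equiv> transpose W *v (pinv (W ** transpose W) *v column i W)"
  shows "a \<bullet> b = column i W \<bullet> column i W"
    and "frac_dim W i = (a \<bullet> b)^2 / (a \<bullet> a)"
    and "leverage W i = b \<bullet> b"
proof -
  let ?w = "column i W" and ?F = "W ** transpose W"
  note cancel = Gram_pinv_cancel[OF column_in_range]
  show ab: "a \<bullet> b = ?w \<bullet> ?w"
    using inner_Gram_matrix[of ?w W "pinv ?F *v ?w"] by (simp add: a_def b_def cancel)
  have "norm ?w ^ 4 = (?w \<bullet> ?w)^2"
    by (simp add: power2_norm_eq_inner[symmetric] flip: power_mult)
  moreover have "?w \<bullet> (?F *v ?w) = a \<bullet> a" unfolding a_def by (rule inner_Gram_matrix)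
  ultimately show "frac_dim W i = (a \<bullet> b)^2 / (a \<bullet> a)"
    unfolding frac_dim_def ab by simp
  show "leverage W i = b \<bullet> b"
    using inner_Gram_matrix[of "pinv ?F *v ?w" W "pinv ?F *v ?w"]
    by (simp add: leverage_def b_def cancel inner_commute)
qed

lemma frac_dim_pos:
  assumes "column i W \<noteq> 0"
  shows "0 < frac_dim W i"
  using Gram_quadratic_form_pos[OF column_in_range assms] assms by (simp add: frac_dim_def)

lemma frac_dim_le_leverage: "frac_dim W i \<le> leverage W i"
  \<comment> \<open>no hypothesis on the column: when \<open>W\<^sup>T w\<^sub>i = 0\<close> the quotient is \<open>x / 0 = 0\<close>\<close>
proof -
  let ?a = "transpose W *v column i W"
  let ?b = "transpose W *v (pinv (W ** transpose W) *v column i W)"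
  have "(?a \<bullet> ?b)^2 / (?a \<bullet> ?a) \<le> ?b \<bullet> ?b"
  proof (cases "?a = 0")
    case False
    then show ?thesis using Cauchy_Schwarz_ineq[of ?a ?b] by (simp add: divide_le_eq mult.commute)
  qed simp
  then show ?thesis by (simp only: frac_dim_leverage_as_inner)
qed

lemma frac_dim_eq_leverage_iff:
  fixes W :: "real^'n^'m"
  assumes w0: "column i W \<noteq> 0"
  shows "frac_dim W i = leverage W i \<longleftrightarrow>
         (\<exists>lam. (W ** transpose W) *v column i W = lam *\<^sub>R column i W)"
proof -
  let ?w = "column i W" and ?F = "W ** transpose W"
  define a where "a = transpose W *v ?w"
  define b where "b = transpose W *v (pinv ?F *v ?w)"
  note CS = frac_dim_leverage_as_inner[of W i, folded a_def b_def]
  note cancel = Gram_pinv_cancel[OF column_in_range]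
  have Wa: "W *v a = ?F *v ?w" unfolding a_def matrix_vector_mul_assoc ..
  have Wb: "W *v b = ?w" unfolding b_def by (metis cancel(1) matrix_vector_mul_assoc)
  have a0: "a \<noteq> 0" using CS(1) w0 by auto
  have "frac_dim W i = leverage W i \<longleftrightarrow> (a \<bullet> b)^2 = (a \<bullet> a) * (b \<bullet> b)"
    using a0 by (simp add: CS(2,3) divide_eq_eq mult.commute)
  also have "\<dots> \<longleftrightarrow> (\<exists>c. b = c *\<^sub>R a)" using a0 by (rule Cauchy_Schwarz_eq_iff_parallel)
  also have "\<dots> \<longleftrightarrow> (\<exists>lam. ?F *v ?w = lam *\<^sub>R ?w)"
  proof
    assume "\<exists>c. b = c *\<^sub>R a"
    then obtain c where "b = c *\<^sub>R a" ..
    then have w: "?w = c *\<^sub>R (?F *v ?w)" using Wa Wb by (metis matrix_vector_mult_scaleR)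
    then have "c \<noteq> 0" using w0 by auto
    then have "?F *v ?w = (1 / c) *\<^sub>R ?w" by (subst w) simp
    then show "\<exists>lam. ?F *v ?w = lam *\<^sub>R ?w" ..
  next
    assume "\<exists>lam. ?F *v ?w = lam *\<^sub>R ?w"
    then obtain lam where ev: "?F *v ?w = lam *\<^sub>R ?w" ..
    have "lam \<noteq> 0" using Gram_eigenvalue_pos[OF column_in_range w0 ev] by simp
    have "?w = lam *\<^sub>R (pinv ?F *v ?w)"
      using cancel(2) ev by (metis matrix_vector_mult_scaleR)
    then have "(1 / lam) *\<^sub>R ?w = ((1 / lam) * lam) *\<^sub>R (pinv ?F *v ?w)" by (metis scaleR_scaleR)
    then have "pinv ?F *v ?w = (1 / lam) *\<^sub>R ?w" using \<open>lam \<noteq> 0\<close> by simp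
    then have "b = (1 / lam) *\<^sub>R a" by (simp add: a_def b_def matrix_vector_mult_scaleR)
    then show "\<exists>c. b = c *\<^sub>R a" ..
  qed
  finally show ?thesis .
qed

lemma rel_slack_bounds:
  assumes "column i W \<noteq> 0"
  shows "0 \<le> rel_slack W i \<and> rel_slack W i \<le> 1"
  using frac_dim_pos[OF assms] frac_dim_le_leverage[of W i] by (simp add: rel_slack_def field_simps)

lemma leverage_mult_rel_slack:
  assumes "column i W \<noteq> 0"
  shows "leverage W i * rel_slack W i = leverage W i - frac_dim W i"
  using frac_dim_pos[OF assms] frac_dim_le_leverage[of W i] by (simp add: rel_slack_def field_simps)

section \<open>Spectral measure\<close>

lemma subspace_eigenspace: "subspace (eigenspace A lam)"
  unfolding eigenspace_def subspace_def
  by (simp add: matrix_vector_right_distrib scaleR_add_right matrix_vector_mult_scaleR)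

lemma eigenvectors_orthogonal:
  fixes A :: "real^'n^'n"
  assumes "transpose A = A" and "A *v u = lam *\<^sub>R u" "A *v v = mu *\<^sub>R v" and "lam \<noteq> mu"
  shows "u \<bullet> v = 0"
proof -
  have "lam * (u \<bullet> v) = mu * (u \<bullet> v)"
    using symmetric_matrix_self_adjoint[OF assms(1), of u v] assms(2,3) by simp
  then show ?thesis using assms(4) by simp
qed

lemma finite_pos_eigenvalues:
  fixes A :: "real^'n^'n"
  assumes sym: "transpose A = A"
  shows "finite (pos_eigenvalues A)"
proof -
  let ?E = "pos_eigenvalues A"
  have "\<forall>lam\<in>?E. \<exists>u. u \<noteq> 0 \<and> A *v u = lam *\<^sub>R u" by (simp add: pos_eigenvalues_def)
  then obtain v where v: "\<forall>lam\<in>?E. v lam \<noteq> 0 \<and> A *v v lam = lam *\<^sub>R v lam"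
    by (rule bchoice[THEN exE])
  have "inj_on v ?E"
  proof (rule inj_onI)
    fix a b assume ab: "a \<in> ?E" "b \<in> ?E" "v a = v b"
    then have "a *\<^sub>R v a = b *\<^sub>R v a" using v by metis
    then show "a = b" using v ab(1) by simp
  qed
  moreover have "pairwise orthogonal (v ` ?E)"
  proof (rule pairwiseI)
    fix x y assume "x \<in> v ` ?E" "y \<in> v ` ?E" "x \<noteq> y"
    then obtain a b where "a \<in> ?E" "b \<in> ?E" "x = v a" "y = v b" "a \<noteq> b" by blast
    then show "orthogonal x y"
      unfolding orthogonal_def using v eigenvectors_orthogonal[OF sym] by blast
  qed
  then have "independent (v ` ?E)"
    by (rule pairwise_orthogonal_independent) (use v in force)
  ultimately show ?thesis
    using independent_imp_finite finite_imageD by blast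
qed

lemma emeasure_spectral_measure:
  fixes A :: "real^'n^'n"
  assumes sym: "transpose A = A" and S: "S \<in> sets borel"
  shows "emeasure (spectral_measure A w) S =
     ennreal (\<Sum>lam \<in> S \<inter> pos_eigenvalues A. (norm (eig_proj A lam w))^2 / (norm w)^2)"
proof -
  let ?E = "pos_eigenvalues A"
  define c where "c lam = (norm (eig_proj A lam w))^2 / (norm w)^2" for lam
  have fin: "finite ?E" using sym by (rule finite_pos_eigenvalues)
  have "ennreal (\<Sum>lam \<in> T \<inter> ?E. c lam) = (\<Sum>lam\<in>?E. ennreal (c lam) * indicator T lam)" for T
  proof -
    have "(\<Sum>lam \<in> T \<inter> ?E. c lam) = (\<Sum>lam\<in>?E. c lam * indicator T lam)"
      using fin by (simp add: sum.inter_restrict Int_commute indicator_def if_distrib cong: if_cong)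
    also have "ennreal \<dots> = (\<Sum>lam\<in>?E. ennreal (c lam * indicator T lam))"
      by (rule sum_ennreal[symmetric]) (simp add: c_def)
    also have "\<dots> = (\<Sum>lam\<in>?E. ennreal (c lam) * indicator T lam)"
      by (rule sum.cong) (auto simp: indicator_def)
    finally show ?thesis .
  qed
  then have \<mu>: "(\<lambda>T. ennreal (\<Sum>lam \<in> T \<inter> ?E. c lam)) = (\<lambda>T. \<Sum>lam\<in>?E. ennreal (c lam) * indicator T lam)"
    by (rule ext)
  have "sigma_algebra UNIV (sets borel)"
    using sets.sigma_algebra_axioms[of borel] by simp
  moreover have "positive (sets borel) (\<lambda>T. ennreal (\<Sum>lam \<in> T \<inter> ?E. c lam))"
    by (simp add: positive_def)
  moreover have "countably_additive (sets borel) (\<lambda>T. ennreal (\<Sum>lam \<in> T \<inter> ?E. c lam))"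
    unfolding \<mu>
  proof (rule countably_additiveI)
    fix F :: "nat \<Rightarrow> real set"
    assume "disjoint_family F"
    then show "(\<Sum>i. \<Sum>lam\<in>?E. ennreal (c lam) * indicator (F i) lam) =
               (\<Sum>lam\<in>?E. ennreal (c lam) * indicator (\<Union>i. F i) lam)"
      by (subst suminf_sum) (auto intro: summableI simp: suminf_indicator)
  qed
  ultimately show ?thesis
    unfolding spectral_measure_def c_def[symmetric] using S by (rule emeasure_measure_of_sigma)
qed

lemma spectral_measure_eigenvector:
  fixes A :: "real^'n^'n"
  assumes sym: "transpose A = A" and w0: "w \<noteq> 0" and ev: "A *v w = lam *\<^sub>R w" and "0 < lam"
  shows "spectral_measure A w = return borel lam"
proof -
  let ?E = "pos_eigenvalues A"
  have lam: "lam \<in> ?E" using assms unfolding pos_eigenvalues_def by blast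
  have proj: "eig_proj A mu w = (if mu = lam then w else 0)" for mu
  proof (cases "mu = lam")
    case True
    then show ?thesis using ev by (simp add: eig_proj_def eigenspace_def closest_point_self)
  next
    case False
    have "closest_point (eigenspace A mu) w = 0"
      using subspace_eigenspace
    proof (rule closest_point_subspace_unique)
      show "0 \<in> eigenspace A mu" by (simp add: eigenspace_def)
      show "(w - 0) \<bullet> y = 0" if "y \<in> eigenspace A mu" for y
        using eigenvectors_orthogonal[OF sym ev, of y mu] that False by (simp add: eigenspace_def)
    qed
    then show ?thesis using False by (simp add: eig_proj_def)
  qed
  have "(\<Sum>mu \<in> S \<inter> ?E. (norm (eig_proj A mu w))^2 / (norm w)^2) = indicator S lam" for S
  proof -
    have "(\<Sum>mu \<in> S \<inter> ?E. (norm (eig_proj A mu w))^2 / (norm w)^2)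
        = (\<Sum>mu \<in> S \<inter> ?E. if mu = lam then 1 else 0)"
      using w0 by (intro sum.cong) (auto simp: proj)
    also have "\<dots> = indicator S lam"
      using finite_pos_eigenvalues[OF sym] lam by (simp add: indicator_def)
    finally show ?thesis .
  qed
  then show ?thesis unfolding spectral_measure_def return_def by (simp add: ennreal_indicator)
qed

lemma spectral_measure_eq_return_imp_eigenvector:
  fixes A :: "real^'n^'n"
  assumes sym: "transpose A = A" and w0: "w \<noteq> 0" and "spectral_measure A w = return borel lam"
  shows "A *v w = lam *\<^sub>R w"
proof -
  let ?p = "eig_proj A lam w"
  note p_in = closest_point_subspace_in[OF subspace_eigenspace, folded eig_proj_def]
  have "emeasure (spectral_measure A w) {lam} = 1" using assms(3) by simp
  then have "ennreal (\<Sum>mu \<in> {lam} \<inter> pos_eigenvalues A. (norm (eig_proj A mu w))^2 / (norm w)^2) = 1"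
    by (simp add: emeasure_spectral_measure[OF sym])
  then have "(norm ?p)^2 / (norm w)^2 = 1"
    by (cases "lam \<in> pos_eigenvalues A") auto
  then have "?p \<bullet> ?p = w \<bullet> w" using w0 by (simp add: power2_norm_eq_inner)
  moreover have "(w - ?p) \<bullet> ?p = 0"
    unfolding eig_proj_def using subspace_eigenspace
    by (rule closest_point_subspace_orthogonal) (rule closest_point_subspace_in[OF subspace_eigenspace])
  ultimately have "(w - ?p) \<bullet> (w - ?p) = 0" by (simp add: inner_diff inner_commute)
  then have "w = ?p" by simp
  then show ?thesis using p_in[of A lam w] by (simp add: eigenspace_def)
qed

theorem mainTheorem17:
  fixes W :: "real^'n^'m"
  assumes nonzero: "\<And>i. column i W \<noteq> 0"
  defines "F \<equiv> W ** transpose W"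
  defines "r \<equiv> rank W"
  shows "rank F = r
    \<and> (\<forall>i. 0 \<le> rel_slack W i \<and> rel_slack W i \<le> 1)
    \<and> ((\<Sum>i\<in>UNIV. leverage W i) = real r)
    \<and> (\<forall>i. frac_dim W i \<le> leverage W i)
    \<and> (\<forall>i. (frac_dim W i = leverage W i \<longleftrightarrow>
               (\<exists>lam. spectral_measure F (column i W) = return (borel :: real measure) lam)) \<and>
             ((\<exists>lam. spectral_measure F (column i W) = return (borel :: real measure) lam) \<longleftrightarrow>
               (\<exists>lam. F *v column i W = lam *\<^sub>R column i W)))
    \<and> (real r - (\<Sum>i\<in>UNIV. frac_dim W i) = (\<Sum>i\<in>UNIV. leverage W i - frac_dim W i))
    \<and> ((\<Sum>i\<in>UNIV. leverage W i - frac_dim W i) = (\<Sum>i\<in>UNIV. leverage W i * rel_slack W i))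
    \<and> ((r = CARD('m) \<longrightarrow>
           real CARD('m) - (\<Sum>i\<in>UNIV. frac_dim W i) = (\<Sum>i\<in>UNIV. leverage W i * rel_slack W i)))"
proof -
  have dirac_iff_eigenvector:
    "(\<exists>lam. spectral_measure F (column i W) = return borel lam) \<longleftrightarrow>
     (\<exists>lam. F *v column i W = lam *\<^sub>R column i W)" for i
    using spectral_measure_eq_return_imp_eigenvector[OF symmetric_Gram_matrix nonzero]
      spectral_measure_eigenvector[OF symmetric_Gram_matrix nonzero]
      Gram_eigenvalue_pos[OF column_in_range nonzero]
    unfolding F_def by metis
  have sum_leverage: "(\<Sum>i\<in>UNIV. leverage W i) = real r"
    unfolding r_def by (rule sum_leverage_eq_rank)
  then have "real r - (\<Sum>i\<in>UNIV. frac_dim W i) = (\<Sum>i\<in>UNIV. leverage W i - frac_dim W i)"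
    by (simp add: sum_subtractf)
  then show ?thesis
    using sum_leverage dirac_iff_eigenvector rel_slack_bounds[OF nonzero] frac_dim_le_leverage[of W]
      frac_dim_eq_leverage_iff[OF nonzero] leverage_mult_rel_slack[OF nonzero]
    by (simp add: F_def r_def rank_Gram_matrix)
qed

end
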